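(* Let $q$ be a prime power, $s\geq1$, $n=q^{s-1}$, and let $\mathcal{RM}_q(1,s-1)$ be the first order $q$-ary Reed-Muller code. Then for every $0<r<s$, \[ W^{(r)}_{\mathcal{RM}_q(1,s-1)}(X,Y)=\begin{bmatrix} s-1\\ r-1\end{bmatrix}_q Y^n+q^r\begin{bmatrix} s-1\\ r\end{bmatrix}_q X^{q^{s-1-r}}\,Y^{q^{s-1}-q^{s-1-r}}, \] and moreover $W^{(0)}_{\mathcal{RM}_q(1,s-1)}(X,Y)=X^n$ and $W^{(s)}_{\mathcal{RM}_q(1,s-1)}(X,Y)=Y^n$.
   Context: The first order $q$-ary Reed-Muller code $\mathcal{RM}_q(1,s-1)$ is the linear $[q^{s-1},s]$ code over $\mathbb{F}_q$ generated by the $s\times q^{s-1}$ matrix whose first row is the all-one row and whose columns, restricted to the remaining $s-1$ rows, run through all vectors of $\mathbb{F}_q^{s-1}$ (each exactly once). For a linear code $C\subseteq\mathbb{F}_q^n$ and a subcode $D$, the support of $D$ is the set of coordinates where some word of $D$ is nonzero, and $\mathrm{wt}(D)$ is its size. The $r$-th generalized weight enumerator is $W^{(r)}_C(X,Y)=\sum_{w=0}^n A^{(r)}_wX^{n-w}Y^w$ where $A^{(r)}_w$ is the number of $r$-dimensional subspaces $D\subseteq C$ with $\mathrm{wt}(D)=w$. $\begin{bmatrix} a\\ b\end{bmatrix}_q$ denotes the Gaussian binomial coefficient. *)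

theory Defs
  imports Complex_Main "HOL-Library.Function_Algebras" "HOL-Library.Cardinality"
begin

text \<open>Finite field F_q is a type 'a :: {finite, field}; q = CARD('a).
Coordinates of RM_q(1,s-1) are the points of F_q^(s-1), represented as functions
nat => 'a vanishing from index s-1 on. Words are functions from points to 'a,
vanishing off the point set; vector operations are pointwise.\<close>

definition rm_points :: "'a::{finite,field} itself \<Rightarrow> nat \<Rightarrow> (nat \<Rightarrow> 'a) set" where
  "rm_points T s = {x. \<forall>i\<ge>s - 1. x i = 0}"

definition word_scale :: "'a::field \<Rightarrow> ('k \<Rightarrow> 'a) \<Rightarrow> ('k \<Rightarrow> 'a)" where
  "word_scale c f = (\<lambda>x. c * f x)"

text \<open>Codeword of message a = (a_0, a_1, ..., a_{s-1}): generator matrix with all-one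
first row, columns indexed by the points of F_q^(s-1).\<close>
definition rm_word :: "'a::{finite,field} itself \<Rightarrow> nat \<Rightarrow> (nat \<Rightarrow> 'a) \<Rightarrow> ((nat \<Rightarrow> 'a) \<Rightarrow> 'a)" where
  "rm_word T s a = (\<lambda>x. if x \<in> rm_points T s then a 0 + (\<Sum>i<s - 1. a (Suc i) * x i) else 0)"

definition RM :: "'a::{finite,field} itself \<Rightarrow> nat \<Rightarrow> ((nat \<Rightarrow> 'a) \<Rightarrow> 'a) set" where
  "RM T s = range (rm_word T s)"

definition supp :: "(('k \<Rightarrow> 'a::zero)) set \<Rightarrow> 'k set" where
  "supp D = {x. \<exists>c\<in>D. c x \<noteq> 0}"

definition wt :: "(('k \<Rightarrow> 'a::zero)) set \<Rightarrow> nat" where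
  "wt D = card (supp D)"

definition gen_A :: "'a::{finite,field} itself \<Rightarrow> nat \<Rightarrow> nat \<Rightarrow> nat \<Rightarrow> nat" where
  "gen_A T s r w = card {D. module.subspace (word_scale :: 'a \<Rightarrow> _) D \<and> D \<subseteq> RM T s
       \<and> vector_space.dim (word_scale :: 'a \<Rightarrow> _) D = r \<and> wt D = w}"

text \<open>The r-th generalized weight enumerator, evaluated in an arbitrary commutative ring
(universally quantified over X, Y, this is the polynomial identity).\<close>
definition gen_W :: "'a::{finite,field} itself \<Rightarrow> nat \<Rightarrow> nat \<Rightarrow> 'b::comm_ring_1 \<Rightarrow> 'b \<Rightarrow> 'b" where
  "gen_W T s r X Y = (let n = card (rm_points T s) in
     (\<Sum>w = 0..n. of_nat (gen_A T s r w) * X ^ (n - w) * Y ^ w))"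

definition gauss_binom :: "nat \<Rightarrow> nat \<Rightarrow> nat \<Rightarrow> nat" where
  "gauss_binom q a b = (if b \<le> a then (\<Prod>i<b. q ^ a - q ^ i) div (\<Prod>i<b. q ^ b - q ^ i) else 0)"

end

theory Submission
  imports Defs
begin

text \<open>Codewords are the affine functions on \<open>F_q^(s-1)\<close>. An \<open>r\<close>-dimensional subcode containing
  the all-one word has full support. One that avoids it consists of \<open>r\<close> independent non-constant
  affine functions (plus \<open>0\<close>), whose common zero set has \<open>q^(s-1-r)\<close> points by double counting,
  so its weight is \<open>q^(s-1) - q^(s-1-r)\<close>. The enumerator therefore has just two terms, whose
  coefficients count the \<open>r\<close>-dimensional subspaces of \<open>F_q^s\<close> containing, respectively avoiding,
  a fixed nonzero vector; both counts follow by counting lists of vectors that are linearly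
  independent modulo a given subspace.\<close>

section \<open>Counting subspaces over a finite field\<close>

lemma CARD_field_ge_2: "2 \<le> CARD('a::{finite,field})"
proof -
  have "card {0::'a, 1} \<le> CARD('a)" by (rule card_mono) auto
  then show ?thesis by simp
qed

lemma card_eq_mult_card_fibres:
  assumes "finite A" "finite T" "g ` A \<subseteq> T" "\<And>y. y \<in> T \<Longrightarrow> card {x \<in> A. g x = y} = k"
  shows "card A = card T * k"
proof -
  have "card A = (\<Sum>y\<in>T. card {x \<in> A. g x = y})"
    using sum.group[OF assms(1-3), of "\<lambda>_. 1::nat"] by simp
  then show ?thesis using assms(4) by simp
qed

locale finite_field_vector_space = vector_space scale
  for scale :: "'a::{finite,field} \<Rightarrow> 'b::ab_group_add \<Rightarrow> 'b" (infixr \<open>*s\<close> 75)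
begin

lemma card_span_insert:
  assumes "a \<notin> span S"
  shows "card (span (insert a S)) = CARD('a) * card (span S)"
proof -
  let ?g = "\<lambda>(k, y). k *s a + y"
  have "span (insert a S) = ?g ` (UNIV \<times> span S)"
  proof (intro set_eqI iffI)
    fix x assume "x \<in> span (insert a S)"
    then obtain k where "x - k *s a \<in> span S" using span_breakdown_eq by blast
    then show "x \<in> ?g ` (UNIV \<times> span S)" by (intro image_eqI[of _ _ "(k, x - k *s a)"]) auto
  next
    fix x assume "x \<in> ?g ` (UNIV \<times> span S)"
    then obtain k y where "y \<in> span S" "x = k *s a + y" by auto
    then show "x \<in> span (insert a S)" by (metis span_breakdown_eq add_diff_cancel_left')
  qed
  moreover have "inj_on ?g (UNIV \<times> span S)"
  proof (rule inj_onI, clarify)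
    fix k y k' y' assume y: "y \<in> span S" "y' \<in> span S" and eq: "k *s a + y = k' *s a + y'"
    have "(k - k') *s a = y' - y" using eq by (simp add: algebra_simps)
    then have "k \<noteq> k' \<Longrightarrow> a = inverse (k - k') *s (y' - y)"
      by (metis scale_scale scale_one left_inverse eq_iff_diff_eq_0)
    then have "k \<noteq> k' \<Longrightarrow> a \<in> span S" using y by (simp add: span_diff span_scale)
    then have "k = k'" using assms by blast
    then show "k = k' \<and> y = y'" using eq by simp
  qed
  ultimately show ?thesis by (simp add: card_image card_cartesian_product)
qed

lemma card_span_insert_le: "card (span (insert a S)) \<le> CARD('a) * card (span S)"
  using card_span_insert[of a S] by (cases "a \<in> span S") (simp_all add: span_redundant)

lemma card_span_insert_eqD:
  assumes "card (span (insert a S)) = CARD('a) * c" "card (span S) \<le> c" "0 < c"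
  shows "a \<notin> span S" "card (span S) = c"
proof -
  show a: "a \<notin> span S"
  proof
    assume "a \<in> span S"
    then have "CARD('a) * c \<le> c" using assms(1,2) by (simp add: span_redundant)
    then show False using CARD_field_ge_2[where 'a='a] \<open>0 < c\<close> by simp
  qed
  show "card (span S) = c" using assms(1) card_span_insert[OF a] by simp
qed

lemma card_subspace:
  assumes "subspace D" "finite D"
  shows "card D = CARD('a) ^ dim D"
proof -
  obtain B where B: "B \<subseteq> D" "independent B" "D \<subseteq> span B" "card B = dim D"
    using basis_exists by blast
  have "finite B" using B(1) assms(2) finite_subset by blast
  then have "card (span B) = CARD('a) ^ card B"
    using B(2)
  proof (induction B rule: finite_induct)
    case (insert x F)
    then show ?case by (simp add: independent_insert card_span_insert)
  qed simp
  then show ?thesis using span_subspace[OF B(1,3) assms(1)] B(4) by simp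
qed

text \<open>Lists of \<open>m\<close> vectors of \<open>W\<close> that are linearly independent modulo the subspace \<open>B\<close>.\<close>
definition ext_lists :: "'b set \<Rightarrow> 'b set \<Rightarrow> nat \<Rightarrow> 'b list set" where
  "ext_lists B W m = {us. length us = m \<and> set us \<subseteq> W \<and> card (span (B \<union> set us)) = card B * CARD('a) ^ m}"

lemma card_span_union_le:
  assumes "subspace B"
  shows "card (span (B \<union> set us)) \<le> card B * CARD('a) ^ length us"
proof (induction us)
  case (Cons u us)
  have "card (span (B \<union> set (u # us))) \<le> CARD('a) * card (span (B \<union> set us))"
    using card_span_insert_le by simp
  also have "\<dots> \<le> card B * CARD('a) ^ length (u # us)" using Cons by simp
  finally show ?case .
next
  case Nil
  have "span B = B" using assms by simp
  then show ?case by (simp del: span_eq_iff)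
qed

lemma ext_lists_Suc:
  assumes "subspace B" "finite B"
  shows "ext_lists B W (Suc m) = (\<lambda>(us, u). u # us) ` (SIGMA us:ext_lists B W m. W - span (B \<union> set us))"
proof (intro set_eqI iffI)
  fix xs assume xs: "xs \<in> ext_lists B W (Suc m)"
  then obtain u us where xs_eq: "xs = u # us" unfolding ext_lists_def by (cases xs) auto
  have "card B > 0" using assms subspace_0 card_gt_0_iff by blast
  then have "u \<notin> span (B \<union> set us)" "card (span (B \<union> set us)) = card B * CARD('a) ^ m"
    using card_span_insert_eqD[of u "B \<union> set us" "card B * CARD('a) ^ m"]
      card_span_union_le[OF assms(1), of us] xs xs_eq by (auto simp: ext_lists_def ac_simps)
  then show "xs \<in> (\<lambda>(us, u). u # us) ` (SIGMA us:ext_lists B W m. W - span (B \<union> set us))"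
    using xs xs_eq by (force simp: ext_lists_def)
next
  fix xs assume "xs \<in> (\<lambda>(us, u). u # us) ` (SIGMA us:ext_lists B W m. W - span (B \<union> set us))"
  then obtain us u where "us \<in> ext_lists B W m" "u \<in> W" "u \<notin> span (B \<union> set us)" "xs = u # us"
    by auto
  then show "xs \<in> ext_lists B W (Suc m)" by (simp add: ext_lists_def card_span_insert)
qed

lemma finite_ext_lists: "finite W \<Longrightarrow> finite (ext_lists B W m)"
  by (rule finite_subset[OF _ finite_lists_length_eq[of W m]]) (auto simp: ext_lists_def)

lemma span_ext_lists_subset:
  assumes "us \<in> ext_lists B V m" "subspace V" "B \<subseteq> V"
  shows "span (B \<union> set us) \<subseteq> V"
  using assms by (intro span_minimal) (auto simp: ext_lists_def)

lemma card_ext_lists: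
  assumes "subspace V" "finite V" "subspace B" "B \<subseteq> V"
  shows "card (ext_lists B V m) = (\<Prod>i<m. card V - card B * CARD('a) ^ i)"
proof (induction m)
  case 0
  have "span B = B" using assms(3) by simp
  then have "ext_lists B V 0 = {[]}" by (auto simp: ext_lists_def simp del: span_eq_iff)
  then show ?case by simp
next
  case (Suc m)
  have finB: "finite B" using assms(2,4) finite_subset by blast
  have "card (ext_lists B V (Suc m)) = card (SIGMA us:ext_lists B V m. V - span (B \<union> set us))"
    unfolding ext_lists_Suc[OF assms(3) finB] by (rule card_image) (auto simp: inj_on_def)
  also have "\<dots> = (\<Sum>us\<in>ext_lists B V m. card (V - span (B \<union> set us)))"
    using finite_ext_lists assms(2) by (simp add: card_SigmaI)
  also have "\<dots> = (\<Sum>us\<in>ext_lists B V m. card V - card B * CARD('a) ^ m)"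
  proof (rule sum.cong[OF refl])
    fix us assume us: "us \<in> ext_lists B V m"
    then have "span (B \<union> set us) \<subseteq> V" using assms by (intro span_ext_lists_subset)
    then show "card (V - span (B \<union> set us)) = card V - card B * CARD('a) ^ m"
      using us assms(2) by (simp add: card_Diff_subset finite_subset ext_lists_def)
  qed
  finally show ?case using Suc by simp
qed

lemma span_ext_lists_eq:
  assumes "us \<in> ext_lists B D m" "subspace D" "finite D" "B \<subseteq> D" "card D = card B * CARD('a) ^ m"
  shows "span (B \<union> set us) = D"
  using assms span_ext_lists_subset[OF assms(1,2,4)]
  by (intro card_subset_eq) (auto simp: ext_lists_def)

text \<open>Group the lists extending \<open>B\<close> by the subspace they span together with \<open>B\<close>.\<close>
lemma card_subspaces_containing:
  assumes V: "subspace V" "finite V" and B: "subspace B" "B \<subseteq> V"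
  shows "card {D. subspace D \<and> B \<subseteq> D \<and> D \<subseteq> V \<and> card D = card B * CARD('a) ^ m}
           * (\<Prod>i<m. card B * CARD('a) ^ m - card B * CARD('a) ^ i)
         = (\<Prod>i<m. card V - card B * CARD('a) ^ i)"
proof -
  define Sub where "Sub = {D. subspace D \<and> B \<subseteq> D \<and> D \<subseteq> V \<and> card D = card B * CARD('a) ^ m}"
  have "card (ext_lists B V m) = card Sub * (\<Prod>i<m. card B * CARD('a) ^ m - card B * CARD('a) ^ i)"
  proof (rule card_eq_mult_card_fibres[where g = "\<lambda>us. span (B \<union> set us)"])
    show "finite (ext_lists B V m)" using V(2) by (rule finite_ext_lists)
    show "finite Sub" using V(2) by (auto simp: Sub_def intro: finite_subset[of _ "Pow V"])
    show "(\<lambda>us. span (B \<union> set us)) ` ext_lists B V m \<subseteq> Sub"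
      using span_ext_lists_subset[OF _ V(1) B(2)] by (auto simp: Sub_def ext_lists_def intro: span_base)
    fix D assume D: "D \<in> Sub"
    have finD: "finite D" using D V(2) finite_subset by (auto simp: Sub_def)
    have "{us \<in> ext_lists B V m. span (B \<union> set us) = D} = ext_lists B D m"
      using span_ext_lists_eq[of _ B D m] D finD by (auto simp: Sub_def ext_lists_def intro: span_base)
    then show "card {us \<in> ext_lists B V m. span (B \<union> set us) = D}
        = (\<Prod>i<m. card B * CARD('a) ^ m - card B * CARD('a) ^ i)"
      using D card_ext_lists[of D B m] B(1) finD by (simp add: Sub_def)
  qed
  then show ?thesis using card_ext_lists[OF V B] by (simp add: Sub_def)
qed

text \<open>A list extending \<open>span {u}\<close> by \<open>m\<close> dimensions spans on its own an \<open>m\<close>-dimensional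
  subspace avoiding \<open>u\<close>, and every such subspace arises from exactly its ordered bases.\<close>
lemma card_subspaces_avoiding:
  assumes V: "subspace V" "finite V" and u: "u \<in> V" "u \<noteq> 0"
  shows "card {D. subspace D \<and> D \<subseteq> V \<and> card D = CARD('a) ^ m \<and> u \<notin> D}
           * (\<Prod>i<m. CARD('a) ^ m - CARD('a) ^ i)
         = (\<Prod>i<m. card V - CARD('a) * CARD('a) ^ i)"
proof -
  define Sub where "Sub = {D. subspace D \<and> D \<subseteq> V \<and> card D = CARD('a) ^ m \<and> u \<notin> D}"
  define U where "U = span {u}"
  have U: "subspace U" "U \<subseteq> V" "card U = CARD('a)"
    using u V card_span_insert[of u "{}"] by (auto simp: U_def span_minimal)
  have span_U: "span (U \<union> S) = span (insert u S)" for S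
    unfolding U_def insert_is_Un[of u S] span_Un span_span ..
  have list_in_Sub: "span (set us) \<in> Sub" if "us \<in> ext_lists U V m" for us
  proof -
    have "card (span (insert u (set us))) = CARD('a) * CARD('a) ^ m"
      using that U(3) span_U by (simp add: ext_lists_def)
    moreover have "card (span (set us)) \<le> CARD('a) ^ m"
      using that card_span_union_le[OF subspace_single_0, of us] by (simp add: ext_lists_def)
    ultimately have "u \<notin> span (set us)" "card (span (set us)) = CARD('a) ^ m"
      using card_span_insert_eqD by simp_all
    then show ?thesis using that V by (auto simp: Sub_def ext_lists_def span_minimal)
  qed
  have "card (ext_lists U V m) = card Sub * (\<Prod>i<m. CARD('a) ^ m - CARD('a) ^ i)"
  proof (rule card_eq_mult_card_fibres[where g = "\<lambda>us. span (set us)"])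
    show "finite (ext_lists U V m)" using V(2) by (rule finite_ext_lists)
    show "finite Sub" using V(2) by (auto simp: Sub_def intro: finite_subset[of _ "Pow V"])
    show "(\<lambda>us. span (set us)) ` ext_lists U V m \<subseteq> Sub" using list_in_Sub by blast
    fix D assume D: "D \<in> Sub"
    have finD: "finite D" using D V(2) finite_subset by (auto simp: Sub_def)
    have "{us \<in> ext_lists U V m. span (set us) = D} = ext_lists {0} D m"
    proof (intro set_eqI iffI)
      fix us assume "us \<in> {us \<in> ext_lists U V m. span (set us) = D}"
      then show "us \<in> ext_lists {0} D m"
        using list_in_Sub[of us] span_superset[of "set us"] by (auto simp: Sub_def ext_lists_def)
    next
      fix us assume us: "us \<in> ext_lists {0} D m"
      have "span (set us) = D"
        using span_ext_lists_eq[OF us] D finD by (simp add: Sub_def subspace_0)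
      then show "us \<in> {us \<in> ext_lists U V m. span (set us) = D}"
        using us D U(3) span_U card_span_insert[of u "set us"] by (auto simp: Sub_def ext_lists_def)
    qed
    then show "card {us \<in> ext_lists U V m. span (set us) = D} = (\<Prod>i<m. CARD('a) ^ m - CARD('a) ^ i)"
      using D card_ext_lists[of D "{0}" m] finD by (simp add: Sub_def subspace_0)
  qed
  then show ?thesis using card_ext_lists[OF V U(1,2)] U(3) by (simp add: Sub_def)
qed

end

section \<open>The code and the weights of its subcodes\<close>

lemma word_scale_apply [simp]: "word_scale c f x = c * f x"
  by (simp add: word_scale_def)

interpretation words: finite_field_vector_space "word_scale :: 'a::{finite,field} \<Rightarrow> ('k \<Rightarrow> 'a) \<Rightarrow> 'k \<Rightarrow> 'a"
  by unfold_locales (simp_all add: fun_eq_iff algebra_simps)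

lemma card_kernel_eval:
  fixes D :: "('k \<Rightarrow> 'a::{finite,field}) set"
  assumes D: "words.subspace D" and f0: "f0 \<in> D" "f0 x \<noteq> 0"
  shows "card D = CARD('a) * card {f \<in> D. f x = 0}"
proof -
  define K where "K = {f \<in> D. f x = 0}"
  have "words.subspace K" using D unfolding K_def words.subspace_def by auto
  then have span_K: "words.span K = K" by simp
  have "words.span (insert f0 K) = D"
  proof
    show "words.span (insert f0 K) \<subseteq> D"
      using f0 D by (intro words.span_minimal) (auto simp: K_def)
    show "D \<subseteq> words.span (insert f0 K)"
    proof
      fix f assume f: "f \<in> D"
      have "f - word_scale (f x / f0 x) f0 \<in> K"
        using f f0 D by (auto simp: K_def intro!: words.subspace_diff words.subspace_scale)
      then show "f \<in> words.span (insert f0 K)" unfolding words.span_breakdown_eq span_K by blast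
    qed
  qed
  moreover have "f0 \<notin> words.span K" unfolding span_K using f0 by (simp add: K_def)
  ultimately show ?thesis using words.card_span_insert[of f0 K] span_K K_def by metis
qed

lemma card_funs_vanishing_from:
  "card {x :: nat \<Rightarrow> 'a::{finite,zero}. \<forall>i\<ge>k. x i = 0} = CARD('a) ^ k"
proof (induction k)
  case 0
  have "{x :: nat \<Rightarrow> 'a. \<forall>i\<ge>0. x i = 0} = {\<lambda>_. 0}" by auto
  then show ?case by simp
next
  case (Suc k)
  let ?A = "{x :: nat \<Rightarrow> 'a. \<forall>i\<ge>Suc k. x i = 0}"
  let ?B = "{x :: nat \<Rightarrow> 'a. \<forall>i\<ge>k. x i = 0}"
  have "bij_betw (\<lambda>x. (x k, x(k := 0))) ?A (UNIV \<times> ?B)"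
    by (rule bij_betw_byWitness[where f' = "\<lambda>(c, y). y(k := c)"]) auto
  then have "card ?A = card ((UNIV::'a set) \<times> ?B)" by (rule bij_betw_same_card)
  then show ?case using Suc by (simp add: card_cartesian_product)
qed

lemma card_rm_points: "card (rm_points (T::'a::{finite,field} itself) s) = CARD('a) ^ (s - 1)"
  unfolding rm_points_def by (rule card_funs_vanishing_from)

lemma finite_rm_points: "finite (rm_points (T::'a::{finite,field} itself) s)"
  using card_rm_points[of T s] by (intro card_ge_0_finite) simp

lemma rm_word_add: "rm_word T s (a + b) = rm_word T s a + rm_word T s b"
  by (auto simp: rm_word_def fun_eq_iff sum.distrib algebra_simps)

lemma rm_word_scale: "rm_word T s (\<lambda>i. c * a i) = word_scale c (rm_word T s a)"
  by (auto simp: rm_word_def fun_eq_iff sum_distrib_left algebra_simps)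

lemma subspace_RM: "words.subspace (RM T s)"
  unfolding words.subspace_def RM_def
proof (intro conjI ballI allI)
  have "rm_word T s 0 = 0" by (simp add: rm_word_def fun_eq_iff)
  then show "0 \<in> range (rm_word T s)" by (metis rangeI)
  show "x + y \<in> range (rm_word T s)" if "x \<in> range (rm_word T s)" "y \<in> range (rm_word T s)" for x y
    using that by (auto simp flip: rm_word_add)
  show "word_scale c x \<in> range (rm_word T s)" if "x \<in> range (rm_word T s)" for c x
    using that by (auto simp flip: rm_word_scale)
qed

lemma rm_word_coeff:
  fixes T :: "'a::{finite,field} itself"
  assumes "i < s"
  shows "a i = (if i = 0 then rm_word T s a (\<lambda>_. 0)
                else rm_word T s a (\<lambda>t. if t = i - 1 then 1 else 0) - rm_word T s a (\<lambda>_. 0))"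
  using assms by (cases i) (auto simp: rm_word_def rm_points_def if_distrib[of "\<lambda>x. _ * x"] cong: if_cong)

lemma card_RM:
  assumes "s \<ge> 1"
  shows "card (RM (T::'a::{finite,field} itself) s) = CARD('a) ^ s"
proof -
  define M where "M = {a :: nat \<Rightarrow> 'a. \<forall>i\<ge>s. a i = 0}"
  have "RM T s = rm_word T s ` M"
  proof
    show "RM T s \<subseteq> rm_word T s ` M"
    proof
      fix w assume "w \<in> RM T s"
      then obtain a where w: "w = rm_word T s a" by (auto simp: RM_def)
      have "w = rm_word T s (\<lambda>i. if i < s then a i else 0)"
        unfolding w using assms by (auto simp: rm_word_def fun_eq_iff intro!: sum.cong)
      then show "w \<in> rm_word T s ` M" by (auto simp: M_def)
    qed
  qed (auto simp: RM_def)
  moreover have "inj_on (rm_word T s) M"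
  proof (rule inj_onI, rule ext)
    fix a b i assume "a \<in> M" "b \<in> M" "rm_word T s a = rm_word T s b"
    then show "a i = b i"
      using rm_word_coeff[of i s a T] rm_word_coeff[of i s b T] by (cases "i < s") (auto simp: M_def)
  qed
  ultimately show ?thesis by (simp add: card_image M_def card_funs_vanishing_from)
qed

lemma finite_RM: "s \<ge> 1 \<Longrightarrow> finite (RM (T::'a::{finite,field} itself) s)"
  using card_RM[of s T] by (intro card_ge_0_finite) simp

definition rm_one :: "'a::{finite,field} itself \<Rightarrow> nat \<Rightarrow> ((nat \<Rightarrow> 'a) \<Rightarrow> 'a)" where
  "rm_one T s = rm_word T s (\<lambda>i. if i = 0 then 1 else 0)"

lemma rm_one_apply: "rm_one T s x = (if x \<in> rm_points T s then 1 else 0)"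
  by (simp add: rm_one_def rm_word_def)

lemma rm_one_in_RM: "rm_one T s \<in> RM T s"
  by (simp add: rm_one_def RM_def)

lemma rm_one_nonzero: "rm_one T s \<noteq> 0"
proof
  assume "rm_one T s = 0"
  then have "rm_one T s (\<lambda>_. 0) = 0" by simp
  then show False by (simp add: rm_one_apply rm_points_def)
qed

lemma rm_word_constant:
  assumes "\<forall>j<s - 1. a (Suc j) = 0"
  shows "rm_word T s a = word_scale (a 0) (rm_one T s)"
  using assms by (auto simp: rm_word_def rm_one_apply fun_eq_iff)

lemma supp_subset_rm_points: "D \<subseteq> RM T s \<Longrightarrow> supp D \<subseteq> rm_points T s"
  by (auto simp: supp_def RM_def rm_word_def split: if_splits)

lemma wt_le_code_length: "D \<subseteq> RM (T::'a::{finite,field} itself) s \<Longrightarrow> wt D \<le> CARD('a) ^ (s - 1)"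
  using card_mono[OF finite_rm_points supp_subset_rm_points] by (simp add: wt_def card_rm_points)

lemma wt_if_rm_one_mem:
  fixes T :: "'a::{finite,field} itself"
  assumes "D \<subseteq> RM T s" "rm_one T s \<in> D"
  shows "wt D = CARD('a) ^ (s - 1)"
proof -
  have "supp D = rm_points T s"
    using supp_subset_rm_points[OF assms(1)] assms(2) by (force simp: supp_def rm_one_apply)
  then show ?thesis by (simp add: wt_def card_rm_points)
qed

text \<open>A non-constant affine function takes every value equally often: translating along
  a coordinate with nonzero coefficient permutes its level sets.\<close>
lemma card_zeros_rm_word:
  fixes T :: "'a::{finite,field} itself"
  assumes j: "j < s - 1" and aj: "a (Suc j) \<noteq> 0"
  shows "CARD('a) * card {x \<in> rm_points T s. rm_word T s a x = 0} = card (rm_points T s)"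
proof -
  let ?P = "rm_points T s"
  define val where "val x = a 0 + (\<Sum>i<s - 1. a (Suc i) * x i)" for x :: "nat \<Rightarrow> 'a"
  define level where "level c = {x \<in> ?P. val x = c}" for c
  define shift where "shift t x = x(j := x j + t)" for t :: 'a and x :: "nat \<Rightarrow> 'a"
  have val_shift: "val (shift t x) = val x + a (Suc j) * t" for t x
  proof -
    have "(\<Sum>i<s - 1. a (Suc i) * shift t x i)
        = (\<Sum>i<s - 1. a (Suc i) * x i + (if i = j then a (Suc j) * t else 0))"
      by (rule sum.cong) (auto simp: shift_def algebra_simps)
    then show ?thesis using j by (simp add: val_def sum.distrib)
  qed
  have shift_P: "shift t x \<in> ?P \<longleftrightarrow> x \<in> ?P" for t x
    using j by (auto simp: shift_def rm_points_def)
  have shift_inverse: "shift (-t) (shift t x) = x" "shift t (shift (-t) x) = x" for t x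
    by (auto simp: shift_def fun_eq_iff)
  have card_level: "card (level c) = card (level 0)" for c
  proof -
    define t where "t = c / a (Suc j)"
    have "bij_betw (shift t) (level 0) (level c)"
      by (rule bij_betw_byWitness[where f' = "shift (-t)"])
         (use aj in \<open>auto simp: level_def shift_P val_shift t_def shift_inverse\<close>)
    then show ?thesis by (simp add: bij_betw_same_card)
  qed
  have "?P = (\<Union>c. level c)" by (auto simp: level_def)
  then have "card ?P = (\<Sum>c\<in>UNIV. card (level c))"
    using finite_rm_points[of T s] by (simp only:) (rule card_UN_disjoint, auto simp: level_def)
  also have "\<dots> = (\<Sum>c\<in>(UNIV :: 'a set). card (level 0))" by (intro sum.cong refl card_level)
  also have "\<dots> = CARD('a) * card (level 0)" by simp
  moreover have "{x \<in> ?P. rm_word T s a x = 0} = level 0"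
    by (auto simp: level_def rm_word_def val_def)
  ultimately show ?thesis by simp
qed

lemma card_zeros_rm_subspace_avoiding_one:
  fixes T :: "'a::{finite,field} itself"
  assumes D: "words.subspace D" "D \<subseteq> RM T s" "rm_one T s \<notin> D" and f: "f \<in> D" "f \<noteq> 0"
  shows "CARD('a) * card {x \<in> rm_points T s. f x = 0} = card (rm_points T s)"
proof -
  obtain a where a: "f = rm_word T s a" using f D(2) by (auto simp: RM_def)
  have "\<exists>j<s - 1. a (Suc j) \<noteq> 0"
  proof (rule ccontr)
    assume "\<not> ?thesis"
    then have f_const: "f = word_scale (a 0) (rm_one T s)" using a rm_word_constant by blast
    then have "a 0 \<noteq> 0" using f(2) by (auto simp: fun_eq_iff)
    then have "rm_one T s = word_scale (inverse (a 0)) f" by (simp add: f_const fun_eq_iff)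
    then show False using D(3) words.subspace_scale[OF D(1) f(1), of "inverse (a 0)"] by simp
  qed
  then show ?thesis using card_zeros_rm_word a by auto
qed

lemma double_count_arith:
  fixes z n c q :: nat
  assumes "(n - z) * c + z * (q * c) = q * n + (c - 1) * n" "z \<le> n" "2 \<le> q"
  shows "z * c = n"
proof (cases "c = 0")
  case False
  then have "(int n - int z) * int c + int z * (int q * int c) = int q * int n + (int c - 1) * int n"
    using arg_cong[OF assms(1), of int] assms(2) by (simp add: of_nat_diff)
  then have "int (z * c) * (int q - 1) = int n * (int q - 1)" by (simp add: algebra_simps)
  then have "int (z * c) = int n" using assms(3) by (simp del: of_nat_mult)
  then show ?thesis by (simp only: of_nat_eq_iff)
qed (use assms in simp)

text \<open>Double counting of the pairs \<open>(x, f)\<close> with \<open>f x = 0\<close>: a point off the common zero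
  set \<open>Z\<close> of \<open>D\<close> is a zero of a hyperplane of \<open>D\<close>, and each nonzero \<open>f \<in> D\<close> vanishes on a
  \<open>1/q\<close> fraction of the points.\<close>
lemma card_common_zeros_rm_subspace:
  fixes T :: "'a::{finite,field} itself"
  assumes D: "words.subspace D" "D \<subseteq> RM T s" "card D = CARD('a) ^ r" "rm_one T s \<notin> D"
  shows "card {x \<in> rm_points T s. \<forall>f\<in>D. f x = 0} * CARD('a) ^ r = card (rm_points T s)"
proof -
  let ?q = "CARD('a)" and ?P = "rm_points T s" and ?n = "card (rm_points T s)"
  define Z where "Z = {x \<in> ?P. \<forall>f\<in>D. f x = 0}"
  have finD: "finite D" using D(3) by (intro card_ge_0_finite) simp
  have ZP: "Z \<subseteq> ?P" by (auto simp: Z_def)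
  have finZ: "finite Z" using finite_subset[OF ZP finite_rm_points] .
  have "(\<Sum>x\<in>?P - Z. card {f \<in> D. f x = 0}) + (\<Sum>x\<in>Z. card {f \<in> D. f x = 0})
      = (\<Sum>x\<in>?P. card {f \<in> D. f x = 0})"
    by (rule sum.subset_diff[OF ZP finite_rm_points, symmetric])
  also have "\<dots> = (\<Sum>f\<in>D. card {x \<in> ?P. f x = 0})"
    using sum.swap_restrict[OF finite_rm_points finD, of "\<lambda>_ _. 1::nat" "\<lambda>x f. f x = 0"] by simp
  also have "\<dots> = ?n + (\<Sum>f\<in>D - {0}. card {x \<in> ?P. f x = 0})"
    using sum.remove[OF finD words.subspace_0[OF D(1)], of "\<lambda>f. card {x \<in> ?P. f x = 0}"] by simp
  finally have "?q * (\<Sum>x\<in>?P - Z. card {f \<in> D. f x = 0}) + ?q * (\<Sum>x\<in>Z. card {f \<in> D. f x = 0})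
      = ?q * ?n + ?q * (\<Sum>f\<in>D - {0}. card {x \<in> ?P. f x = 0})"
    by (simp only: flip: distrib_left)
  moreover have "?q * (\<Sum>x\<in>?P - Z. card {f \<in> D. f x = 0}) = (?n - card Z) * ?q ^ r"
  proof -
    have "?q * card {f \<in> D. f x = 0} = ?q ^ r" if "x \<in> ?P - Z" for x
      using that card_kernel_eval[OF D(1)] D(3) by (auto simp: Z_def)
    then show ?thesis using ZP finZ by (simp add: sum_distrib_left card_Diff_subset)
  qed
  moreover have "?q * (\<Sum>x\<in>Z. card {f \<in> D. f x = 0}) = card Z * (?q * ?q ^ r)"
  proof -
    have "{f \<in> D. f x = 0} = D" if "x \<in> Z" for x using that by (auto simp: Z_def)
    then show ?thesis using D(3) by simp
  qed
  moreover have "?q * (\<Sum>f\<in>D - {0}. card {x \<in> ?P. f x = 0}) = (?q ^ r - 1) * ?n"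
    using card_zeros_rm_subspace_avoiding_one[OF D(1,2,4)] finD words.subspace_0[OF D(1)] D(3)
    by (simp add: sum_distrib_left card_Diff_subset)
  ultimately have "(?n - card Z) * ?q ^ r + card Z * (?q * ?q ^ r) = ?q * ?n + (?q ^ r - 1) * ?n"
    by simp
  from double_count_arith[OF this card_mono[OF finite_rm_points ZP] CARD_field_ge_2]
  show ?thesis by (simp only: Z_def)
qed

lemma wt_if_rm_one_not_mem:
  fixes T :: "'a::{finite,field} itself"
  assumes D: "words.subspace D" "D \<subseteq> RM T s" "card D = CARD('a) ^ r" "rm_one T s \<notin> D"
    and "r < s"
  shows "wt D = CARD('a) ^ (s - 1) - CARD('a) ^ (s - 1 - r)"
proof -
  let ?q = "CARD('a)" and ?P = "rm_points T s"
  define Z where "Z = {x \<in> ?P. \<forall>f\<in>D. f x = 0}"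
  have "card Z * ?q ^ r = ?q ^ r * ?q ^ (s - 1 - r)"
    using card_common_zeros_rm_subspace[OF D] \<open>r < s\<close> by (simp add: Z_def card_rm_points flip: power_add)
  then have "card Z = ?q ^ (s - 1 - r)" by simp
  moreover have "supp D = ?P - Z" using supp_subset_rm_points[OF D(2)] by (auto simp: supp_def Z_def)
  moreover have "Z \<subseteq> ?P" by (auto simp: Z_def)
  ultimately show ?thesis
    using finite_subset[OF _ finite_rm_points, of Z T s] by (simp add: wt_def card_Diff_subset card_rm_points)
qed

section \<open>The generalized weight enumerator\<close>

definition rm_subspaces :: "'a::{finite,field} itself \<Rightarrow> nat \<Rightarrow> nat \<Rightarrow> ((nat \<Rightarrow> 'a) \<Rightarrow> 'a) set set" where
  "rm_subspaces T s r = {D. words.subspace D \<and> D \<subseteq> RM T s \<and> card D = CARD('a) ^ r}"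

lemma finite_rm_subspaces: "s \<ge> 1 \<Longrightarrow> finite (rm_subspaces T s r)"
  using finite_RM[of s T] by (auto simp: rm_subspaces_def intro: finite_subset[of _ "Pow (RM T s)"])

lemma gen_A_eq_card_rm_subspaces:
  fixes T :: "'a::{finite,field} itself"
  assumes "s \<ge> 1"
  shows "gen_A T s r w = card {D \<in> rm_subspaces T s r. wt D = w}"
proof -
  have "words.dim D = r \<longleftrightarrow> card D = CARD('a) ^ r" if "words.subspace D" "D \<subseteq> RM T s" for D
    using words.card_subspace[OF that(1)] finite_subset[OF that(2) finite_RM[OF assms]]
      CARD_field_ge_2[where 'a = 'a] by (simp add: power_inject_exp)
  then have "{D. words.subspace D \<and> D \<subseteq> RM T s \<and> words.dim D = r \<and> wt D = w}
      = {D \<in> rm_subspaces T s r. wt D = w}"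
    by (auto simp: rm_subspaces_def)
  then show ?thesis by (simp add: gen_A_def)
qed

lemma gen_W_eq_sum_rm_subspaces:
  fixes T :: "'a::{finite,field} itself" and X Y :: "'b::comm_ring_1"
  assumes "s \<ge> 1"
  shows "gen_W T s r X Y = (\<Sum>D\<in>rm_subspaces T s r. X ^ (CARD('a) ^ (s - 1) - wt D) * Y ^ wt D)"
proof -
  let ?n = "CARD('a) ^ (s - 1)" and ?S = "rm_subspaces T s r"
  let ?term = "\<lambda>D. X ^ (?n - wt D) * Y ^ wt D"
  have "gen_W T s r X Y = (\<Sum>w = 0..?n. of_nat (card {D \<in> ?S. wt D = w}) * X ^ (?n - w) * Y ^ w)"
    using assms by (simp add: gen_W_def Let_def card_rm_points gen_A_eq_card_rm_subspaces)
  also have "\<dots> = (\<Sum>w = 0..?n. \<Sum>D\<in>{D \<in> ?S. wt D = w}. ?term D)"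
    by (rule sum.cong) (simp_all add: mult.assoc)
  also have "\<dots> = sum ?term ?S"
    using wt_le_code_length finite_rm_subspaces[OF assms]
    by (intro sum.group) (auto simp: rm_subspaces_def)
  finally show ?thesis .
qed

lemma prod_pow_diff_pos: "2 \<le> q \<Longrightarrow> 0 < (\<Prod>i<b. q ^ b - q ^ i :: nat)"
  by (auto intro!: prod_pos simp: power_strict_increasing_iff)

lemma prod_mult_diff_mult: "(\<Prod>i<m. q * x - q * y i :: nat) = q ^ m * (\<Prod>i<m. x - y i)"
  by (simp add: diff_mult_distrib2[symmetric] prod.distrib)

lemma gauss_binom_eqI:
  assumes "b \<le> a" "2 \<le> q" "N * (\<Prod>i<b. q ^ b - q ^ i) = (\<Prod>i<b. q ^ a - q ^ i)"
  shows "gauss_binom q a b = N"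
  using assms prod_pow_diff_pos[OF assms(2), of b] by (simp add: gauss_binom_def flip: assms(3))

lemma card_rm_subspaces_containing_one_mult:
  fixes T :: "'a::{finite,field} itself"
  assumes "m < s"
  shows "card {D \<in> rm_subspaces T s (Suc m). rm_one T s \<in> D} * (\<Prod>i<m. CARD('a) ^ m - CARD('a) ^ i)
       = (\<Prod>i<m. CARD('a) ^ (s - 1) - CARD('a) ^ i)"
proof -
  let ?q = "CARD('a)" and ?B = "words.span {rm_one T s}"
  have s: "s \<ge> 1" using assms by simp
  have B: "words.subspace ?B" "?B \<subseteq> RM T s" "card ?B = ?q"
    using words.card_span_insert[of "rm_one T s" "{}"] rm_one_nonzero[of T s] rm_one_in_RM[of T s]
      words.span_minimal[of "{rm_one T s}" "RM T s"] subspace_RM[of T s] by auto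
  have "{D. words.subspace D \<and> ?B \<subseteq> D \<and> D \<subseteq> RM T s \<and> card D = card ?B * ?q ^ m}
      = {D \<in> rm_subspaces T s (Suc m). rm_one T s \<in> D}"
    using B(3) words.span_minimal[of "{rm_one T s}"] words.span_base[of "rm_one T s" "{rm_one T s}"]
    by (auto simp: rm_subspaces_def)
  moreover have "?q ^ s = ?q * ?q ^ (s - 1)" using s by (simp flip: power_Suc)
  ultimately have "card {D \<in> rm_subspaces T s (Suc m). rm_one T s \<in> D} * (?q ^ m * (\<Prod>i<m. ?q ^ m - ?q ^ i))
      = ?q ^ m * (\<Prod>i<m. ?q ^ (s - 1) - ?q ^ i)"
    using words.card_subspaces_containing[OF subspace_RM finite_RM[OF s] B(1,2), where m = m] B(3) card_RM[OF s, of T]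
    by (simp add: prod_mult_diff_mult)
  then show ?thesis by simp
qed

lemma card_rm_subspaces_containing_one:
  fixes T :: "'a::{finite,field} itself"
  assumes "m < s"
  shows "card {D \<in> rm_subspaces T s (Suc m). rm_one T s \<in> D} = gauss_binom CARD('a) (s - 1) m"
proof -
  have "m \<le> s - 1" using assms by simp
  from gauss_binom_eqI[OF this CARD_field_ge_2 card_rm_subspaces_containing_one_mult[OF assms]]
  show ?thesis by (rule sym)
qed

lemma card_rm_subspaces_avoiding_one:
  fixes T :: "'a::{finite,field} itself"
  assumes "r < s"
  shows "card {D \<in> rm_subspaces T s r. rm_one T s \<notin> D} = CARD('a) ^ r * gauss_binom CARD('a) (s - 1) r"
proof -
  let ?q = "CARD('a)" and ?N = "card {D \<in> rm_subspaces T s r. rm_one T s \<notin> D}"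
  define P where "P = (\<Prod>i<r. ?q ^ r - ?q ^ i)"
  have s: "s \<ge> 1" using assms by simp
  have "?q ^ s = ?q * ?q ^ (s - 1)" using s by (simp flip: power_Suc)
  moreover have "{D \<in> rm_subspaces T s r. rm_one T s \<notin> D}
      = {D. words.subspace D \<and> D \<subseteq> RM T s \<and> card D = ?q ^ r \<and> rm_one T s \<notin> D}"
    by (auto simp: rm_subspaces_def)
  ultimately have "?N * P = ?q ^ r * (\<Prod>i<r. ?q ^ (s - 1) - ?q ^ i)"
    using words.card_subspaces_avoiding[OF subspace_RM[of T s] finite_RM[OF s, of T]
        rm_one_in_RM[of T s] rm_one_nonzero[of T s], where m = r]
      card_RM[OF s, of T]
    by (simp add: P_def prod_mult_diff_mult)
  also have "\<dots> = ?q ^ r * gauss_binom ?q (s - 1) r * P"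
    using card_rm_subspaces_containing_one_mult[OF assms, of T] card_rm_subspaces_containing_one[OF assms, of T]
    by (simp add: P_def)
  finally have "?N * P = ?q ^ r * gauss_binom ?q (s - 1) r * P" .
  moreover have "P \<noteq> 0" using prod_pow_diff_pos[OF CARD_field_ge_2[where 'a = 'a], of r] unfolding P_def by linarith
  ultimately show ?thesis by simp
qed

lemma gen_W_eq_counts:
  fixes T :: "'a::{finite,field} itself" and X Y :: "'b::comm_ring_1"
  assumes "r < s"
  shows "gen_W T s r X Y =
      of_nat (card {D \<in> rm_subspaces T s r. rm_one T s \<in> D}) * Y ^ (CARD('a) ^ (s - 1))
    + of_nat (card {D \<in> rm_subspaces T s r. rm_one T s \<notin> D})
        * X ^ (CARD('a) ^ (s - 1 - r)) * Y ^ (CARD('a) ^ (s - 1) - CARD('a) ^ (s - 1 - r))"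
proof -
  let ?n = "CARD('a) ^ (s - 1)" and ?e = "CARD('a) ^ (s - 1 - r)" and ?S = "rm_subspaces T s r"
  have s: "s \<ge> 1" using assms by simp
  have "?e \<le> ?n" by (simp add: power_increasing)
  then have "X ^ (?n - wt D) * Y ^ wt D
      = (if rm_one T s \<in> D then Y ^ ?n else X ^ ?e * Y ^ (?n - ?e))" if "D \<in> ?S" for D
    using that wt_if_rm_one_mem[of D T s] wt_if_rm_one_not_mem[of D T s r] assms
    by (auto simp: rm_subspaces_def)
  then have "gen_W T s r X Y = (\<Sum>D\<in>?S. if rm_one T s \<in> D then Y ^ ?n else X ^ ?e * Y ^ (?n - ?e))"
    by (simp add: gen_W_eq_sum_rm_subspaces[OF s] cong: sum.cong)
  also have "\<dots> = (\<Sum>D\<in>?S \<inter> {D. rm_one T s \<in> D}. Y ^ ?n) + (\<Sum>D\<in>?S \<inter> - {D. rm_one T s \<in> D}. X ^ ?e * Y ^ (?n - ?e))"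
    by (rule sum.If_cases[OF finite_rm_subspaces[OF s]])
  finally show ?thesis by (simp add: Int_def mult.assoc)
qed

lemma rm_subspaces_0: "rm_subspaces T s 0 = {{0}}"
proof -
  have "D = {0}" if "words.subspace D" "card D = 1" for D :: "((nat \<Rightarrow> 'a) \<Rightarrow> 'a) set"
    using that words.subspace_0 by (metis card_1_singletonE singletonD)
  then show ?thesis using subspace_RM[of T s] words.subspace_0 by (auto simp: rm_subspaces_def)
qed

lemma rm_subspaces_top:
  fixes T :: "'a::{finite,field} itself"
  assumes "s \<ge> 1"
  shows "rm_subspaces T s s = {RM T s}"
proof -
  have "D = RM T s" if "D \<subseteq> RM T s" "card D = CARD('a) ^ s" for D
    using card_subset_eq[OF finite_RM[OF assms] that(1)] that(2) card_RM[OF assms, of T] by simp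
  then show ?thesis using card_RM[OF assms, of T] subspace_RM[of T s] by (auto simp: rm_subspaces_def)
qed

theorem mainTheorem4:
  fixes T :: "'a::{finite,field} itself" and s :: nat and X Y :: "'b::comm_ring_1"
  assumes "s \<ge> 1"
  shows "(\<forall>r. 0 < r \<and> r < s \<longrightarrow>
            gen_W T s r X Y =
              of_nat (gauss_binom (CARD('a)) (s - 1) (r - 1)) * Y ^ (CARD('a) ^ (s - 1))
            + of_nat (CARD('a) ^ r * gauss_binom (CARD('a)) (s - 1) r)
                * X ^ (CARD('a) ^ (s - 1 - r)) * Y ^ (CARD('a) ^ (s - 1) - CARD('a) ^ (s - 1 - r)))
       \<and> gen_W T s 0 X Y = X ^ (CARD('a) ^ (s - 1))
       \<and> gen_W T s s X Y = Y ^ (CARD('a) ^ (s - 1))"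
proof (intro conjI allI impI)
  fix r assume r: "0 < r \<and> r < s"
  then have "r = Suc (r - 1)" "r - 1 < s" by auto
  then show "gen_W T s r X Y =
              of_nat (gauss_binom (CARD('a)) (s - 1) (r - 1)) * Y ^ (CARD('a) ^ (s - 1))
            + of_nat (CARD('a) ^ r * gauss_binom (CARD('a)) (s - 1) r)
                * X ^ (CARD('a) ^ (s - 1 - r)) * Y ^ (CARD('a) ^ (s - 1) - CARD('a) ^ (s - 1 - r))"
    using gen_W_eq_counts[of r s T X Y] card_rm_subspaces_containing_one[of "r - 1" s T]
      card_rm_subspaces_avoiding_one[of r s T] r by simp
next
  show "gen_W T s 0 X Y = X ^ (CARD('a) ^ (s - 1))"
    using assms by (simp add: gen_W_eq_sum_rm_subspaces rm_subspaces_0 wt_def supp_def)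
next
  show "gen_W T s s X Y = Y ^ (CARD('a) ^ (s - 1))"
    using assms wt_if_rm_one_mem[OF subset_refl rm_one_in_RM, of T s]
    by (simp add: gen_W_eq_sum_rm_subspaces rm_subspaces_top)
qed

end
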